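(* Let $n\ge1$ and $\mathcal{K}=\{\texttt{a},\texttt{b}\}$ (so $k=2$). For the uniform prior $\pi$ on $\mathcal{K}^n$ and the single-target gain function $g_{\rm T}$, the posterior vulnerability of the shuffle channel is $$V_{\rm T}[\pi\triangleright\mathbf{S}]=\frac{1}{2^n}\sum_{i=0}^{n}\binom{n}{i}\frac{\max(i,n-i)}{n}.$$
   Context: A dataset is $x=(x_0,\dots,x_{n-1})\in\mathcal{K}^n$; its histogram $h(x)$ is the map $\kappa\mapsto|\{i:x_i=\kappa\}|$; $\#z$ is the number of datasets with histogram $z$. Shuffle channel $\mathbf{S}:\mathcal{K}^n\to\mathcal{K}^n$: $\mathbf{S}_{x,y}=1/\#h(x)$ if $h(y)=h(x)$, else $0$. Uniform prior: $\pi_x=1/2^n$. Single-target gain function: $\mathcal{W}=\mathcal{K}$, $g_{\rm T}(w,x)=1$ if $x_0=w$, else $0$. Posterior vulnerability: $V_{\rm T}[\pi\triangleright\mathbf{C}]=\sum_{y}\max_{w\in\mathcal{W}}\sum_{x}\pi_x\mathbf{C}_{x,y}g_{\rm T}(w,x)$. *)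

theory Defs
  imports Complex_Main
begin

datatype sym = Sa | Sb

definition datasets :: "nat \<Rightarrow> sym list set" where
  "datasets n = {xs. length xs = n}"

definition hist :: "sym list \<Rightarrow> sym \<Rightarrow> nat" where
  "hist xs = (\<lambda>k. count_list xs k)"

definition nhist :: "nat \<Rightarrow> (sym \<Rightarrow> nat) \<Rightarrow> nat" where
  "nhist n z = card {y \<in> datasets n. hist y = z}"

definition shuffle :: "nat \<Rightarrow> sym list \<Rightarrow> sym list \<Rightarrow> real" where
  "shuffle n x y = (if hist y = hist x then 1 / real (nhist n (hist x)) else 0)"

definition prior :: "nat \<Rightarrow> sym list \<Rightarrow> real" where
  "prior n x = 1 / 2 ^ n"

definition gT :: "sym \<Rightarrow> sym list \<Rightarrow> real" where
  "gT w x = (if x ! 0 = w then 1 else 0)"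

definition postV :: "nat \<Rightarrow> real" where
  "postV n = (\<Sum>y\<in>datasets n. Max ((\<lambda>w. \<Sum>x\<in>datasets n. prior n x * shuffle n x y * gT w x) ` UNIV))"

end

theory Submission
  imports Defs
begin

text \<open>Observing the shuffled dataset reveals exactly the number i of \<open>a\<close>'s in the secret,
and given i the posterior is uniform on the \<open>n choose i\<close> datasets with that count. Among
them a fraction i/n starts with \<open>a\<close> and (n - i)/n with \<open>b\<close>, so the best guess of
the first entry succeeds with probability max i (n - i) / n; the class has prior mass
\<open>(n choose i) / 2 ^ n\<close>.\<close>

lemma UNIV_sym: "(UNIV :: sym set) = {Sa, Sb}"
  using sym.exhaust by auto

lemma count_list_Sa_plus_Sb: "count_list xs Sa + count_list xs Sb = length xs"
proof (induction xs)
  case (Cons x xs)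
  then show ?case by (cases x) auto
qed simp

lemma finite_datasets: "finite (datasets n)"
proof -
  have "finite (UNIV :: sym set)"
    by (simp add: UNIV_sym)
  from finite_lists_length_eq[OF this, of n] show ?thesis
    by (simp add: datasets_def)
qed

definition count_class :: "nat \<Rightarrow> nat \<Rightarrow> sym list set" where
  "count_class n i = {xs \<in> datasets n. count_list xs Sa = i}"

lemma count_class_Suc_head_Sa:
  "{xs \<in> count_class (Suc n) i. xs ! 0 = Sa}
     = (if i = 0 then {} else Cons Sa ` count_class n (i - 1))"
  by (auto simp: count_class_def datasets_def length_Suc_conv)

lemma count_class_Suc_head_Sb:
  "{xs \<in> count_class (Suc n) i. xs ! 0 = Sb} = Cons Sb ` count_class n i"
  by (auto simp: count_class_def datasets_def length_Suc_conv)

lemma card_count_class: "card (count_class n i) = n choose i"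
proof (induction n arbitrary: i)
  case 0
  have "count_class 0 i = (if i = 0 then {[]} else {})"
    by (auto simp: count_class_def datasets_def)
  then show ?case by simp
next
  case (Suc n)
  have split: "count_class (Suc n) i
      = {xs \<in> count_class (Suc n) i. xs ! 0 = Sa} \<union> {xs \<in> count_class (Suc n) i. xs ! 0 = Sb}"
    using UNIV_sym by auto
  have "card (count_class (Suc n) i)
      = card {xs \<in> count_class (Suc n) i. xs ! 0 = Sa} + card {xs \<in> count_class (Suc n) i. xs ! 0 = Sb}"
    by (subst split, rule card_Un_disjoint)
       (auto simp: count_class_Suc_head_Sa count_class_Suc_head_Sb count_class_def datasets_def
             intro: finite_subset[OF _ finite_datasets])
  also have "\<dots> = (if i = 0 then 0 else n choose (i - 1)) + (n choose i)"
    by (simp add: count_class_Suc_head_Sa count_class_Suc_head_Sb card_image Suc.IH)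
  also have "\<dots> = Suc n choose i"
    by (cases i) simp_all
  finally show ?case .
qed

lemma card_count_class_head_Sa:
  "n * card {xs \<in> count_class n i. xs ! 0 = Sa} = i * (n choose i)"
proof (cases n)
  case (Suc m)
  then show ?thesis
    using Suc_times_binomial[of "i - 1" m]
    by (cases i) (simp_all add: count_class_Suc_head_Sa card_image card_count_class del: binomial_Suc_Suc)
qed auto

lemma card_count_class_head_Sb:
  "n * card {xs \<in> count_class n i. xs ! 0 = Sb} = (n - i) * (n choose i)"
proof (cases n)
  case (Suc m)
  then show ?thesis
    using binomial_absorb_comp[of n i]
    by (simp add: count_class_Suc_head_Sb card_image card_count_class)
qed simp

lemma sum_datasets_by_count_Sa:
  "(\<Sum>xs\<in>datasets n. f (count_list xs Sa)) = (\<Sum>i=0..n. of_nat (n choose i) * f i)"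
proof -
  have "count_list xs Sa \<in> {0..n}" if "xs \<in> datasets n" for xs
    using that count_le_length[of xs Sa] by (simp add: datasets_def)
  then have "(\<Sum>xs\<in>datasets n. f (count_list xs Sa))
      = (\<Sum>i=0..n. \<Sum>xs\<in>count_class n i. f (count_list xs Sa))"
    unfolding count_class_def by (intro sum.group[symmetric] finite_datasets) auto
  also have "\<dots> = (\<Sum>i=0..n. \<Sum>xs\<in>count_class n i. f i)"
    by (intro sum.cong) (auto simp: count_class_def)
  finally show ?thesis
    by (simp add: card_count_class)
qed

lemma hist_eq_iff_count_Sa:
  assumes "length xs = length ys"
  shows "hist xs = hist ys \<longleftrightarrow> count_list xs Sa = count_list ys Sa"
proof
  assume Sa: "count_list xs Sa = count_list ys Sa"
  moreover have "count_list xs Sb = count_list ys Sb"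
    using Sa assms count_list_Sa_plus_Sb[of xs] count_list_Sa_plus_Sb[of ys] by simp
  ultimately have "count_list xs k = count_list ys k" for k
    by (cases k) simp_all
  then show "hist xs = hist ys"
    by (simp add: hist_def)
qed (simp add: hist_def)

lemma hist_class_eq_count_class:
  assumes "ys \<in> datasets n"
  shows "{xs \<in> datasets n. hist xs = hist ys} = count_class n (count_list ys Sa)"
  using assms hist_eq_iff_count_Sa[of _ ys] by (auto simp: count_class_def datasets_def)

lemma posterior_mass:
  assumes ys: "ys \<in> datasets n"
  defines "i \<equiv> count_list ys Sa"
  shows "(\<Sum>xs\<in>datasets n. prior n xs * shuffle n xs ys * gT w xs)
       = card {xs \<in> count_class n i. xs ! 0 = w} / (2 ^ n * (n choose i))"
proof -
  let ?S = "{xs \<in> count_class n i. xs ! 0 = w}"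
  let ?p = "1 / (2 ^ n * real (n choose i))"
  have "prior n xs * shuffle n xs ys * gT w xs = (if xs \<in> ?S then ?p else 0)"
    if xs: "xs \<in> datasets n" for xs
  proof (cases "count_list xs Sa = i")
    case True
    then have "hist ys = hist xs"
      using xs ys hist_eq_iff_count_Sa[of ys xs] by (simp add: datasets_def i_def)
    moreover have "nhist n (hist xs) = n choose i"
      using hist_class_eq_count_class[OF xs] True by (simp add: nhist_def card_count_class)
    ultimately show ?thesis
      using xs True by (simp add: prior_def shuffle_def gT_def count_class_def)
  next
    case False
    then have "hist ys \<noteq> hist xs"
      using xs ys hist_eq_iff_count_Sa[of ys xs] by (simp add: datasets_def i_def)
    then show ?thesis
      using False by (simp add: shuffle_def count_class_def)
  qed
  then have "(\<Sum>xs\<in>datasets n. prior n xs * shuffle n xs ys * gT w xs)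
      = (\<Sum>xs\<in>datasets n. if xs \<in> ?S then ?p else 0)"
    by (rule sum.cong[OF refl])
  also have "\<dots> = (\<Sum>xs\<in>datasets n \<inter> ?S. ?p)"
    by (rule sum.inter_restrict[OF finite_datasets, symmetric])
  also have "datasets n \<inter> ?S = ?S"
    by (auto simp: count_class_def)
  finally show ?thesis
    by simp
qed

lemma Max_posterior_column:
  assumes n: "n > 0" and ys: "ys \<in> datasets n"
  defines "i \<equiv> count_list ys Sa"
  shows "Max ((\<lambda>w. \<Sum>xs\<in>datasets n. prior n xs * shuffle n xs ys * gT w xs) ` UNIV)
       = real (max i (n - i)) / (real n * 2 ^ n)"
proof -
  have "i \<le> n"
    using ys count_le_length[of ys Sa] by (simp add: datasets_def i_def)
  then have choose_pos: "real (n choose i) > 0"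
    by simp
  have "real n * card {xs \<in> count_class n i. xs ! 0 = Sa} = real i * (n choose i)"
    using card_count_class_head_Sa[of n i] by (metis of_nat_mult)
  then have Sa: "card {xs \<in> count_class n i. xs ! 0 = Sa} / (2 ^ n * (n choose i))
      = real i / (real n * 2 ^ n)"
    using n choose_pos by (simp add: field_simps)
  have "real n * card {xs \<in> count_class n i. xs ! 0 = Sb} = real (n - i) * (n choose i)"
    using card_count_class_head_Sb[of n i] by (metis of_nat_mult)
  then have Sb: "card {xs \<in> count_class n i. xs ! 0 = Sb} / (2 ^ n * (n choose i))
      = real (n - i) / (real n * 2 ^ n)"
    using n choose_pos by (simp add: field_simps)
  have "Max ((\<lambda>w. \<Sum>xs\<in>datasets n. prior n xs * shuffle n xs ys * gT w xs) ` UNIV)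
      = max (card {xs \<in> count_class n i. xs ! 0 = Sa} / (2 ^ n * (n choose i)))
            (card {xs \<in> count_class n i. xs ! 0 = Sb} / (2 ^ n * (n choose i)))"
    using posterior_mass[OF ys] by (simp add: UNIV_sym i_def)
  also have "\<dots> = max (real i) (real (n - i)) / (real n * 2 ^ n)"
    unfolding Sa Sb by (simp add: max_divide_distrib_right)
  finally show ?thesis
    by (simp only: of_nat_max)
qed

theorem mainTheorem9:
  fixes n :: nat
  assumes "n \<ge> 1"
  shows "postV n = (1 / 2 ^ n) * (\<Sum>i=0..n. real (n choose i) * real (max i (n - i)) / real n)"
proof -
  have "postV n = (\<Sum>ys\<in>datasets n.
      real (max (count_list ys Sa) (n - count_list ys Sa)) / (real n * 2 ^ n))"
    unfolding postV_def using assms by (intro sum.cong) (simp_all add: Max_posterior_column)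
  also have "\<dots> = (\<Sum>i=0..n. real (n choose i) * (real (max i (n - i)) / (real n * 2 ^ n)))"
    by (rule sum_datasets_by_count_Sa)
  finally show ?thesis
    by (simp add: sum_distrib_left field_simps)
qed

end
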